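(* Let $K$ be a field of characteristic $\neq 2$, $A\in K[t]$ non-zero, and let $(x,y,z)$ be a fundamental Markoff triple for $A$. (1) If $x\neq 0$, then $A$ and $x$ are constants (elements of $K$). (2) If $x=0$, then $K$ contains a square root $i$ of $-1$, and there exist $f\in K[t]\setminus K$ and $\varepsilon\in\{\pm1\}$ with $y=\varepsilon i f$ and $z=f$.
   Context: For non-zero $A\in K[t]$, solutions are triples $(x,y,z)\in K[t]^3$ with $x^2+y^2+z^2=Axyz$. The degree of the zero polynomial is $-\infty$. The height is $\max\{\deg x,\deg y,\deg z\}$. A Markoff triple is a solution with positive height and $\deg x\le\deg y\le\deg z$; it is fundamental if moreover $\deg y=\deg z$. *)

theory Defs
  imports "HOL-Computational_Algebra.Polynomial" "HOL-Library.Extended_Real"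
begin

definition pdeg :: "'a::zero poly \<Rightarrow> ereal" where
  "pdeg p = (if p = 0 then -\<infinity> else ereal (real (degree p)))"

definition markoff_solution :: "'k::field poly \<Rightarrow> 'k poly \<Rightarrow> 'k poly \<Rightarrow> 'k poly \<Rightarrow> bool" where
  "markoff_solution A x y z \<longleftrightarrow> x^2 + y^2 + z^2 = A * x * y * z"

definition height :: "'k::zero poly \<Rightarrow> 'k poly \<Rightarrow> 'k poly \<Rightarrow> ereal" where
  "height x y z = max (pdeg x) (max (pdeg y) (pdeg z))"

definition markoff_triple :: "'k::field poly \<Rightarrow> 'k poly \<Rightarrow> 'k poly \<Rightarrow> 'k poly \<Rightarrow> bool" where
  "markoff_triple A x y z \<longleftrightarrow> markoff_solution A x y z \<and> height x y z > 0
     \<and> pdeg x \<le> pdeg y \<and> pdeg y \<le> pdeg z"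

definition fundamental_markoff_triple :: "'k::field poly \<Rightarrow> 'k poly \<Rightarrow> 'k poly \<Rightarrow> 'k poly \<Rightarrow> bool" where
  "fundamental_markoff_triple A x y z \<longleftrightarrow> markoff_triple A x y z \<and> pdeg y = pdeg z"

end

theory Submission
  imports Defs
begin

text \<open>
  If \<open>x \<noteq> 0\<close>, comparing degrees in \<open>x\<^sup>2 + y\<^sup>2 + z\<^sup>2 = Axyz\<close> gives
  \<open>deg A + deg x + deg y + deg z \<le> 2 deg z\<close>, and \<open>deg y = deg z\<close> forces \<open>deg A = deg x = 0\<close>.
  If \<open>x = 0\<close>, then \<open>y\<^sup>2 = -z\<^sup>2\<close>; the ratio \<open>i\<close> of leading coefficients satisfies
  \<open>i\<^sup>2 = -1\<close>, and \<open>(y - iz)(y + iz) = 0\<close> in the domain \<open>K[t]\<close> gives \<open>y = \<plusminus>iz\<close>.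
\<close>

lemma pdeg_le_pdeg_iff:
  "p \<noteq> 0 \<Longrightarrow> q \<noteq> 0 \<Longrightarrow> pdeg p \<le> pdeg q \<longleftrightarrow> degree p \<le> degree q"
  by (simp add: pdeg_def)

lemma pdeg_pos_iff: "pdeg p > 0 \<longleftrightarrow> p \<noteq> 0 \<and> degree p \<ge> 1"
  by (auto simp: pdeg_def)

lemma fundamental_markoff_triple_degrees:
  assumes "fundamental_markoff_triple A x y z"
  shows "x^2 + y^2 + z^2 = A * x * y * z" and "y \<noteq> 0" and "z \<noteq> 0"
    and "degree y = degree z" and "degree z \<ge> 1"
    and "x \<noteq> 0 \<Longrightarrow> degree x \<le> degree y"
proof -
  have xy: "pdeg x \<le> pdeg y" and yz: "pdeg y = pdeg z" and h: "height x y z > 0"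
    using assms by (auto simp: fundamental_markoff_triple_def markoff_triple_def)
  have "height x y z = pdeg z"
    using xy yz by (simp add: height_def max_def)
  with h show z: "z \<noteq> 0" and "degree z \<ge> 1"
    by (simp_all add: pdeg_pos_iff)
  with yz show y: "y \<noteq> 0" and "degree y = degree z"
    by (auto simp: pdeg_def split: if_splits)
  show "x^2 + y^2 + z^2 = A * x * y * z"
    using assms by (simp add: fundamental_markoff_triple_def markoff_triple_def markoff_solution_def)
  show "degree x \<le> degree y" if "x \<noteq> 0"
    using xy y that by (simp add: pdeg_le_pdeg_iff)
qed

lemma degree_sum_of_three_squares_le:
  fixes x y z :: "'a::comm_ring_1 poly"
  assumes "degree x \<le> n" "degree y \<le> n" "degree z \<le> n"
  shows "degree (x^2 + y^2 + z^2) \<le> 2 * n"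
proof -
  have "degree (p^2) \<le> 2 * n" if "degree p \<le> n" for p :: "'a poly"
    using degree_power_le[of p 2] that by simp
  then show ?thesis
    using assms by (intro degree_add_le) simp_all
qed

lemma markoff_equation_degree_bound:
  fixes A x y z :: "'k::field poly"
  assumes eq: "x^2 + y^2 + z^2 = A * x * y * z"
    and nz: "A \<noteq> 0" "x \<noteq> 0" "y \<noteq> 0" "z \<noteq> 0"
    and "degree x \<le> degree z" "degree y \<le> degree z"
  shows "degree A + degree x + degree y \<le> degree z"
proof -
  have "degree A + degree x + degree y + degree z = degree (A * x * y * z)"
    using nz by (simp add: degree_mult_eq)
  also have "\<dots> \<le> 2 * degree z"
    unfolding eq[symmetric] using assms by (intro degree_sum_of_three_squares_le) simp_all
  finally show ?thesis by simp
qed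

lemma sum_of_two_squares_eq_0_poly:
  fixes y z :: "'k::field poly"
  assumes yz: "y^2 + z^2 = 0" and z: "z \<noteq> 0"
  obtains i where "i^2 = -1" and "y = smult i z \<or> y = smult (-i) z"
proof -
  define i where "i = lead_coeff y / lead_coeff z"
  have "(lead_coeff y)^2 = - ((lead_coeff z)^2)"
    using arg_cong[OF yz[unfolded add_eq_0_iff2], of lead_coeff]
    by (simp only: lead_coeff_minus lead_coeff_power)
  then have i2: "i^2 = -1"
    using z by (simp add: i_def power_divide)
  have "(y - smult i z) * (y + smult i z) = y^2 - smult (i^2) (z^2)"
    by (simp add: algebra_simps power2_eq_square)
  also have "\<dots> = 0"
    using yz i2 by (simp add: add_eq_0_iff2)
  finally have "y = smult i z \<or> y = - smult i z"
    by (simp add: add_eq_0_iff2)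
  with i2 show thesis
    by (intro that) auto
qed

theorem lemma2p2:
  fixes A x y z :: "'k::field poly"
  assumes char: "(2::'k) \<noteq> 0"
    and A: "A \<noteq> 0"
    and fund: "fundamental_markoff_triple A x y z"
  shows "(x \<noteq> 0 \<longrightarrow> degree A = 0 \<and> degree x = 0)
       \<and> (x = 0 \<longrightarrow> (\<exists>i::'k. i^2 = -1 \<and>
            (\<exists>f \<epsilon>. degree f \<ge> 1 \<and> \<epsilon> \<in> {1, -1} \<and> y = smult (\<epsilon> * i) f \<and> z = f)))"
proof (rule conjI; rule impI)
  note triple = fundamental_markoff_triple_degrees[OF fund]
  show "degree A = 0 \<and> degree x = 0" if "x \<noteq> 0"
    using markoff_equation_degree_bound[OF triple(1) A that triple(2,3)] triple(4) triple(6)[OF that]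
    by simp
  assume "x = 0"
  with triple(1) have "y^2 + z^2 = 0" by simp
  then obtain i where i2: "i^2 = -1" and "y = smult i z \<or> y = smult (-i) z"
    using sum_of_two_squares_eq_0_poly triple(3) by blast
  then have "\<exists>\<epsilon>\<in>{1, -1}. y = smult (\<epsilon> * i) z" by auto
  with i2 triple(5) show "\<exists>i::'k. i^2 = -1 \<and>
      (\<exists>f \<epsilon>. degree f \<ge> 1 \<and> \<epsilon> \<in> {1, -1} \<and> y = smult (\<epsilon> * i) f \<and> z = f)"
    by blast
qed

end
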